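(* Let $Y$ be a finite connected simple undirected graph with vertex set $\{1,\dots,n\}$, let $\pi\in S_Y$, and let $g,g'\in D_n$ with $g\neq g'$. If $[g\cdot\pi]_Y=[g'\cdot\pi]_Y$, then $Y$ is bipartite.
   Context: $S_Y$ denotes the set of permutations $\pi=(\pi_1,\dots,\pi_n)$ of the vertex set of $Y$. The update graph $U(Y)$ has vertex set $S_Y$, two permutations being adjacent if they differ exactly by swapping two consecutive entries $\pi_k,\pi_{k+1}$ with $\{\pi_k,\pi_{k+1}\}$ not an edge of $Y$; $\pi\sim_Y\pi'$ iff they lie in the same connected component of $U(Y)$, and $[\pi]_Y$ is the class of $\pi$. Let $\sigma=(n,n-1,\dots,2,1)$ and $\rho=(1,n)(2,n-1)\cdots(\lceil n/2\rceil,\lfloor n/2\rfloor+1)$ in $S_n$ (cycle notation), and $D_n=\langle\sigma,\rho\rangle$, acting on $S_Y$ by $g\cdot(\pi_1,\dots,\pi_n)=(\pi_{g^{-1}(1)},\dots,\pi_{g^{-1}(n)})$. Thus $\sigma\cdot\pi=(\pi_2,\dots,\pi_n,\pi_1)$ and $\rho\cdot\pi=(\pi_n,\dots,\pi_1)$. *)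

theory Defs
  imports Main
begin

definition simple_graph :: "nat \<Rightarrow> (nat \<Rightarrow> nat \<Rightarrow> bool) \<Rightarrow> bool" where
  "simple_graph n E \<longleftrightarrow>
     (\<forall>u v. E u v \<longrightarrow> u \<in> {1..n} \<and> v \<in> {1..n}) \<and>
     (\<forall>u v. E u v \<longrightarrow> E v u) \<and> (\<forall>u. \<not> E u u)"

definition graph_connected :: "nat \<Rightarrow> (nat \<Rightarrow> nat \<Rightarrow> bool) \<Rightarrow> bool" where
  "graph_connected n E \<longleftrightarrow> (\<forall>u\<in>{1..n}. \<forall>v\<in>{1..n}. E\<^sup>*\<^sup>* u v)"

definition bipartite :: "nat \<Rightarrow> (nat \<Rightarrow> nat \<Rightarrow> bool) \<Rightarrow> bool" where
  "bipartite n E \<longleftrightarrow> (\<exists>A \<subseteq> {1..n}. \<forall>u v. E u v \<longrightarrow> (u \<in> A \<longleftrightarrow> v \<notin> A))"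

definition perms_Y :: "nat \<Rightarrow> nat list set" where
  "perms_Y n = {\<pi>. distinct \<pi> \<and> set \<pi> = {1..n}}"

text \<open>Adjacency in the update graph U(Y): swap entries at positions k, k+1 (0-based)
  when they are not adjacent in Y.\<close>
definition upd_adj :: "(nat \<Rightarrow> nat \<Rightarrow> bool) \<Rightarrow> nat list \<Rightarrow> nat list \<Rightarrow> bool" where
  "upd_adj E \<pi> \<pi>' \<longleftrightarrow> (\<exists>k. Suc k < length \<pi> \<and> \<not> E (\<pi> ! k) (\<pi> ! Suc k) \<and>
      \<pi>' = \<pi>[k := \<pi> ! Suc k, Suc k := \<pi> ! k])"

definition upd_class :: "nat \<Rightarrow> (nat \<Rightarrow> nat \<Rightarrow> bool) \<Rightarrow> nat list \<Rightarrow> nat list set" where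
  "upd_class n E \<pi> = {\<pi>' \<in> perms_Y n. (upd_adj E)\<^sup>*\<^sup>* \<pi> \<pi>'}"

text \<open>sigma = (n, n-1, ..., 1) and rho = (1 n)(2 n-1)..., as permutations of {1..n}
  (identity outside {1..n}).\<close>
definition sigma_n :: "nat \<Rightarrow> nat \<Rightarrow> nat" where
  "sigma_n n i = (if i \<in> {1..n} then (if i = 1 then n else i - 1) else i)"

definition rho_n :: "nat \<Rightarrow> nat \<Rightarrow> nat" where
  "rho_n n i = (if i \<in> {1..n} then Suc n - i else i)"

text \<open>D_n = subgroup of S_n generated by sigma and rho (in a finite group the
  generated submonoid equals the generated subgroup).\<close>
inductive_set dihedral :: "nat \<Rightarrow> (nat \<Rightarrow> nat) set" for n where
  id_in: "id \<in> dihedral n"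
| sigma_in: "g \<in> dihedral n \<Longrightarrow> sigma_n n \<circ> g \<in> dihedral n"
| rho_in: "g \<in> dihedral n \<Longrightarrow> rho_n n \<circ> g \<in> dihedral n"

definition act :: "nat \<Rightarrow> (nat \<Rightarrow> nat) \<Rightarrow> nat list \<Rightarrow> nat list" where
  "act n g \<pi> = map (\<lambda>i. \<pi> ! (the_inv_into {1..n} g i - 1)) [1..<Suc n]"

end

theory Submission
  imports Defs
begin

text \<open>Moves in the update graph only swap entries that are not adjacent in Y, so the class
  \<open>[\<tau>]\<^sub>Y\<close> determines, for every edge of Y, which endpoint comes first in \<open>\<tau>\<close>.
  Counting positions from 0, every element of \<open>D\<^sub>n\<close> acts on positions as
  \<open>x \<mapsto> \<plusminus>x + c (mod n)\<close>, so \<open>g'\<cdot>\<pi>\<close> arises from \<open>g\<cdot>\<pi>\<close> by a non-trivial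
  rotation \<open>x \<mapsto> x + d\<close> or a reflection \<open>x \<mapsto> d - x\<close> of positions that keeps the order
  of the endpoints of every edge.
  A rotation moves the positions \<open>\<ge> n - d\<close> in front of the others, reversing every edge
  between the two blocks; by connectivity there is such an edge, so rotations are impossible.
  A reflection reverses the order within \<open>{x \<le> d}\<close> and within \<open>{x > d}\<close>, so no edge
  lies inside either part: the two parts form a bipartition of Y.\<close>

lemma bij_sigma_n: "bij_betw (sigma_n n) {1..n} {1..n}"
  by (rule bij_betw_byWitness[where f' = "\<lambda>i. if i = n then 1 else Suc i"])
     (auto simp: sigma_n_def)

lemma bij_rho_n: "bij_betw (rho_n n) {1..n} {1..n}"
  by (rule bij_betw_byWitness[where f' = "rho_n n"]) (auto simp: rho_n_def)

lemma dihedral_bij: "g \<in> dihedral n \<Longrightarrow> bij_betw g {1..n} {1..n}"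
proof (induction rule: dihedral.induct)
  case (sigma_in g)
  then show ?case using bij_betw_trans bij_sigma_n by blast
next
  case (rho_in g)
  then show ?case using bij_betw_trans bij_rho_n by blast
qed (simp add: bij_betw_def)

lemma dihedral_fixes_outside: "g \<in> dihedral n \<Longrightarrow> i \<notin> {1..n} \<Longrightarrow> g i = i"
  by (induction rule: dihedral.induct) (auto simp: sigma_n_def rho_n_def)

lemma dihedral_affine:
  assumes "g \<in> dihedral n"
  shows "\<exists>s c. (s = 1 \<or> s = -1) \<and> (\<forall>i<n. int (g (Suc i)) - 1 = (s * int i + c) mod int n)"
  using assms
proof induction
  case id_in
  show ?case by (rule exI[of _ 1], rule exI[of _ 0]) auto
next
  case (sigma_in g)
  then obtain s c where s: "s = 1 \<or> s = -1"
    and g: "\<forall>i<n. int (g (Suc i)) - 1 = (s * int i + c) mod int n" by blast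
  have "int (sigma_n n (g (Suc i))) - 1 = (s * int i + (c - 1)) mod int n" if i: "i < n" for i
  proof -
    define y where "y = (s * int i + c) mod int n"
    have y: "0 \<le> y" "y < int n" "int (g (Suc i)) = y + 1"
      using g i unfolding y_def by auto
    have "(s * int i + (c - 1)) mod int n = (y - 1) mod int n"
      unfolding y_def by (simp add: mod_diff_left_eq algebra_simps)
    also have "\<dots> = (if y = 0 then int n - 1 else y - 1)"
      using y zmod_minus1[of "int n"] by auto
    finally show ?thesis using y by (auto simp: sigma_n_def)
  qed
  then show ?case using s by auto
next
  case (rho_in g)
  then obtain s c where s: "s = 1 \<or> s = -1"
    and g: "\<forall>i<n. int (g (Suc i)) - 1 = (s * int i + c) mod int n" by blast
  have "int (rho_n n (g (Suc i))) - 1 = (- s * int i + (- c - 1)) mod int n" if i: "i < n" for i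
  proof -
    define y where "y = (s * int i + c) mod int n"
    have y: "0 \<le> y" "y < int n" "int (g (Suc i)) = y + 1"
      using g i unfolding y_def by auto
    have "(- s * int i + (- c - 1)) mod int n = (- 1 - y) mod int n"
      unfolding y_def mod_diff_right_eq by (rule arg_cong[where f = "\<lambda>x. x mod int n"]) simp
    also have "\<dots> = (int n - 1 - y) mod int n"
      by (metis diff_add_eq mod_add_self2 uminus_add_conv_diff)
    also have "\<dots> = int n - 1 - y" using y by simp
    finally show ?thesis using y by (auto simp: rho_n_def)
  qed
  then show ?case using s by (intro exI[of _ "- s"] exI[of _ "- c - 1"]) auto
qed

lemma dihedral_eqI:
  assumes "g \<in> dihedral n" "g' \<in> dihedral n" and "\<And>i. i < n \<Longrightarrow> g (Suc i) = g' (Suc i)"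
  shows "g = g'"
proof
  fix i show "g i = g' i"
    using assms(3)[of "i - 1"] dihedral_fixes_outside[OF assms(1)] dihedral_fixes_outside[OF assms(2)]
    by (cases "i \<in> {1..n}") auto
qed

lemma dihedral_relative_affine:
  assumes g: "g \<in> dihedral n" and g': "g' \<in> dihedral n" and "g \<noteq> g'"
  obtains s d where "s = 1 \<or> s = -1" "0 \<le> d" "d < int n" "s = 1 \<Longrightarrow> d \<noteq> 0"
    "\<And>i. i < n \<Longrightarrow> int (g' (Suc i)) - 1 = (s * (int (g (Suc i)) - 1) + d) mod int n"
proof -
  have "n > 0" using dihedral_eqI[OF g g'] \<open>g \<noteq> g'\<close> by auto
  obtain e c where e: "e = 1 \<or> e = -1"
    and gc: "\<forall>i<n. int (g (Suc i)) - 1 = (e * int i + c) mod int n"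
    using dihedral_affine[OF g] by blast
  obtain e' c' where e': "e' = 1 \<or> e' = -1"
    and gc': "\<forall>i<n. int (g' (Suc i)) - 1 = (e' * int i + c') mod int n"
    using dihedral_affine[OF g'] by blast
  define s d where "s = e * e'" and "d = (c' - s * c) mod int n"
  have rel: "int (g' (Suc i)) - 1 = (s * (int (g (Suc i)) - 1) + d) mod int n" if "i < n" for i
  proof -
    have "(s * (int (g (Suc i)) - 1) + d) mod int n
        = (s * ((e * int i + c) mod int n) + (c' - s * c)) mod int n"
      using gc that unfolding d_def by (simp add: mod_add_right_eq)
    also have "\<dots> = (s * (e * int i + c) + (c' - s * c)) mod int n"
      by (metis mod_add_left_eq mod_mult_right_eq)
    also have "\<dots> = (e' * int i + c') mod int n"
      using e e' unfolding s_def by (auto simp: algebra_simps)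
    finally show ?thesis using gc' that by simp
  qed
  have "d \<noteq> 0" if "s = 1"
  proof
    assume "d = 0"
    have "g (Suc i) = g' (Suc i)" if "i < n" for i
    proof -
      have "g (Suc i) \<in> {1..n}"
        using bij_betwE[OF dihedral_bij[OF g]] \<open>i < n\<close> by simp
      then show ?thesis using rel[OF \<open>i < n\<close>] \<open>s = 1\<close> \<open>d = 0\<close> by simp
    qed
    then show False using dihedral_eqI[OF g g'] \<open>g \<noteq> g'\<close> by blast
  qed
  then show thesis
    using that[of s d] rel e e' \<open>n > 0\<close> unfolding s_def d_def by auto
qed

definition precedes :: "nat list \<Rightarrow> nat \<Rightarrow> nat \<Rightarrow> bool" where
  "precedes \<tau> u v \<longleftrightarrow> (\<exists>i j. i < j \<and> j < length \<tau> \<and> \<tau> ! i = u \<and> \<tau> ! j = v)"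

lemma precedes_upd_adj:
  assumes "symp E" and "upd_adj E \<tau> \<tau>'" and "E u v" and "precedes \<tau>' u v"
  shows "precedes \<tau> u v"
proof -
  obtain k where k: "Suc k < length \<tau>" "\<not> E (\<tau> ! k) (\<tau> ! Suc k)"
    and \<tau>': "\<tau>' = \<tau>[k := \<tau> ! Suc k, Suc k := \<tau> ! k]"
    using assms(2) unfolding upd_adj_def by blast
  obtain i j where ij: "i < j" "j < length \<tau>'" "\<tau>' ! i = u" "\<tau>' ! j = v"
    using assms(4) unfolding precedes_def by blast
  define swap where "swap x = (if x = k then Suc k else if x = Suc k then k else x)" for x
  have nth_swap: "\<tau>' ! x = \<tau> ! swap x" if "x < length \<tau>" for x
    using k that unfolding \<tau>' swap_def by (auto simp: nth_list_update)
  have "(i, j) \<noteq> (k, Suc k)"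
  proof
    assume "(i, j) = (k, Suc k)"
    then have "E (\<tau> ! Suc k) (\<tau> ! k)"
      using nth_swap ij k \<open>E u v\<close> unfolding swap_def by auto
    then show False using k(2) \<open>symp E\<close> by (meson sympD)
  qed
  then have "swap i < swap j" "swap j < length \<tau>"
    using ij k unfolding \<tau>' swap_def by auto
  moreover have "\<tau> ! swap i = u" "\<tau> ! swap j = v"
    using nth_swap ij \<tau>' by auto
  ultimately show ?thesis unfolding precedes_def by blast
qed

lemma precedes_upd_path:
  assumes "symp E" and "(upd_adj E)\<^sup>*\<^sup>* \<tau> \<tau>'" and "E u v" and "precedes \<tau>' u v"
  shows "precedes \<tau> u v"
  using assms(2,4) by induction (use precedes_upd_adj[OF \<open>symp E\<close> _ \<open>E u v\<close>] in blast)+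

lemma perms_Y_length: "\<pi> \<in> perms_Y n \<Longrightarrow> length \<pi> = n"
  unfolding perms_Y_def using distinct_card by fastforce

lemma perms_Y_bij_nth: "\<pi> \<in> perms_Y n \<Longrightarrow> bij_betw ((!) \<pi>) {..<n} {1..n}"
  using perms_Y_length[of \<pi> n] by (intro bij_betw_nth) (auto simp: perms_Y_def)

lemma map_bij_in_perms_Y: "bij_betw f {1..n} {1..n} \<Longrightarrow> map f [1..<Suc n] \<in> perms_Y n"
  unfolding perms_Y_def bij_betw_def
  by (simp add: distinct_map atLeastLessThanSuc_atLeastAtMost del: upt_Suc)

lemma act_in_perms_Y:
  assumes g: "bij_betw g {1..n} {1..n}" and \<pi>: "\<pi> \<in> perms_Y n"
  shows "act n g \<pi> \<in> perms_Y n"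
proof -
  have "bij_betw (\<lambda>i. i - 1) {1..n} {..<n}"
    by (rule bij_betw_byWitness[where f' = Suc]) auto
  then have "bij_betw ((!) \<pi> \<circ> (\<lambda>i. the_inv_into {1..n} g i - 1)) {1..n} {1..n}"
    using bij_betw_trans[OF bij_betw_trans[OF bij_betw_the_inv_into[OF g]] perms_Y_bij_nth[OF \<pi>]]
    by (simp add: comp_def)
  then show ?thesis
    using map_bij_in_perms_Y unfolding act_def comp_def by blast
qed

lemma act_nth_image:
  assumes g: "bij_betw g {1..n} {1..n}" and "a < n"
  shows "g (Suc a) - 1 < n" and "act n g \<pi> ! (g (Suc a) - 1) = \<pi> ! a"
proof -
  have ga: "g (Suc a) \<in> {1..n}" using bij_betwE[OF g] \<open>a < n\<close> by simp
  then show "g (Suc a) - 1 < n" by auto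
  have "the_inv_into {1..n} g (g (Suc a)) = Suc a"
    using the_inv_into_f_f[OF bij_betw_imp_inj_on[OF g]] \<open>a < n\<close> by simp
  then show "act n g \<pi> ! (g (Suc a) - 1) = \<pi> ! a"
    using ga unfolding act_def by (auto simp del: upt_Suc)
qed

lemma precedes_act_iff:
  assumes g: "bij_betw g {1..n} {1..n}" and \<pi>: "\<pi> \<in> perms_Y n" and "a < n" "b < n"
  shows "precedes (act n g \<pi>) (\<pi> ! a) (\<pi> ! b) \<longleftrightarrow> g (Suc a) < g (Suc b)"
proof -
  let ?\<tau> = "act n g \<pi>"
  have \<tau>: "distinct ?\<tau>" "length ?\<tau> = n"
    using act_in_perms_Y[OF g \<pi>] perms_Y_length unfolding perms_Y_def by auto
  have position: "?\<tau> ! i = \<pi> ! x \<longleftrightarrow> i = g (Suc x) - 1" if "i < n" "x < n" for i x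
    using act_nth_image[OF g \<open>x < n\<close>] nth_eq_iff_index_eq[OF \<tau>(1)] \<tau>(2) that by metis
  have "g (Suc a) \<ge> 1" using bij_betwE[OF g] \<open>a < n\<close> by simp
  show ?thesis
  proof
    assume "precedes ?\<tau> (\<pi> ! a) (\<pi> ! b)"
    then obtain i j where "i < j" "j < n" "?\<tau> ! i = \<pi> ! a" "?\<tau> ! j = \<pi> ! b"
      unfolding precedes_def \<tau>(2) by blast
    then have "i = g (Suc a) - 1" "j = g (Suc b) - 1"
      using position \<open>a < n\<close> \<open>b < n\<close> by auto
    then show "g (Suc a) < g (Suc b)" using \<open>i < j\<close> by linarith
  next
    assume "g (Suc a) < g (Suc b)"
    then have "g (Suc a) - 1 < g (Suc b) - 1" using \<open>g (Suc a) \<ge> 1\<close> by linarith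
    then show "precedes ?\<tau> (\<pi> ! a) (\<pi> ! b)"
      using act_nth_image[OF g] \<open>a < n\<close> \<open>b < n\<close> \<tau>(2) unfolding precedes_def by metis
  qed
qed

lemma upd_class_eq_edge_order:
  assumes E: "simple_graph n E" and \<pi>: "\<pi> \<in> perms_Y n"
    and g: "bij_betw g {1..n} {1..n}" and g': "bij_betw g' {1..n} {1..n}"
    and cls: "upd_class n E (act n g \<pi>) = upd_class n E (act n g' \<pi>)"
    and a: "a < n" and b: "b < n" and edge: "E (\<pi> ! a) (\<pi> ! b)"
  shows "g (Suc a) < g (Suc b) \<longleftrightarrow> g' (Suc a) < g' (Suc b)"
proof -
  have "symp E" using E unfolding simple_graph_def symp_def by blast
  have "act n g \<pi> \<in> upd_class n E (act n g \<pi>)"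
    using act_in_perms_Y[OF g \<pi>] unfolding upd_class_def by simp
  then have path: "(upd_adj E)\<^sup>*\<^sup>* (act n g' \<pi>) (act n g \<pi>)"
    using cls unfolding upd_class_def by simp
  have "a \<noteq> b" using edge E unfolding simple_graph_def by auto
  then have "g (Suc a) \<noteq> g (Suc b)" "g' (Suc a) \<noteq> g' (Suc b)"
    using a b inj_onD[OF bij_betw_imp_inj_on[OF g], of "Suc a" "Suc b"]
      inj_onD[OF bij_betw_imp_inj_on[OF g'], of "Suc a" "Suc b"] by auto
  moreover have "g (Suc a) < g (Suc b) \<Longrightarrow> g' (Suc a) < g' (Suc b)"
    using precedes_upd_path[OF \<open>symp E\<close> path edge]
    unfolding precedes_act_iff[OF g \<pi> a b] precedes_act_iff[OF g' \<pi> a b] .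
  moreover have "g (Suc b) < g (Suc a) \<Longrightarrow> g' (Suc b) < g' (Suc a)"
    using precedes_upd_path[OF \<open>symp E\<close> path sympD[OF \<open>symp E\<close> edge]]
    unfolding precedes_act_iff[OF g \<pi> b a] precedes_act_iff[OF g' \<pi> b a] .
  ultimately show ?thesis by linarith
qed

lemma upd_class_eq_vertex_order:
  assumes E: "simple_graph n E" and \<pi>: "\<pi> \<in> perms_Y n"
    and g: "bij_betw g {1..n} {1..n}" and g': "bij_betw g' {1..n} {1..n}"
    and cls: "upd_class n E (act n g \<pi>) = upd_class n E (act n g' \<pi>)"
  obtains p where "bij_betw p {1..n} {..<n}"
    "\<And>u v. E u v \<Longrightarrow> g (Suc (p u)) < g (Suc (p v)) \<longleftrightarrow> g' (Suc (p u)) < g' (Suc (p v))"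
proof -
  define p where "p = the_inv_into {..<n} ((!) \<pi>)"
  have p: "bij_betw p {1..n} {..<n}" "\<And>v. v \<in> {1..n} \<Longrightarrow> \<pi> ! p v = v"
    using perms_Y_bij_nth[OF \<pi>] unfolding p_def
    by (auto intro: bij_betw_the_inv_into f_the_inv_into_f_bij_betw)
  show thesis
  proof (rule that[OF p(1)])
    fix u v assume "E u v"
    then have "u \<in> {1..n}" "v \<in> {1..n}" using E unfolding simple_graph_def by blast+
    then show "g (Suc (p u)) < g (Suc (p v)) \<longleftrightarrow> g' (Suc (p u)) < g' (Suc (p v))"
      using upd_class_eq_edge_order[OF E \<pi> g g' cls, of "p u" "p v"] p bij_betwE[OF p(1)] \<open>E u v\<close>
      by auto
  qed
qed

lemma bij_betw_positions:
  assumes "bij_betw g {1..n} {1..n}"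
  shows "bij_betw (\<lambda>a. int (g (Suc a)) - 1) {..<n} {0..<int n}"
proof -
  have "bij_betw Suc {..<n} {1..n}"
    by (rule bij_betw_byWitness[where f' = "\<lambda>i. i - 1"]) auto
  moreover have "bij_betw (\<lambda>j. int j - 1) {1..n} {0..<int n}"
    by (rule bij_betw_byWitness[where f' = "\<lambda>x. nat x + 1"]) auto
  ultimately have "bij_betw ((\<lambda>j. int j - 1) \<circ> g \<circ> Suc) {..<n} {0..<int n}"
    by (blast intro: bij_betw_trans assms)
  then show ?thesis by (simp add: comp_def)
qed

lemma connected_edge_leaving:
  assumes "graph_connected n E" "A \<subseteq> {1..n}" "u \<in> A" "w \<in> {1..n}" "w \<notin> A"
  obtains x y where "E x y" "x \<in> A" "y \<notin> A"
proof -
  have "E\<^sup>*\<^sup>* u w" using assms unfolding graph_connected_def by blast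
  then have "\<exists>x y. E x y \<and> x \<in> A \<and> y \<notin> A"
    using \<open>w \<notin> A\<close> by induction (use \<open>u \<in> A\<close> in blast)+
  then show thesis using that by blast
qed

lemma shift_mod:
  fixes x d n :: int
  assumes "0 \<le> x" "x < n" "0 \<le> d" "d < n"
  shows "(x + d) mod n = (if x + d < n then x + d else x + d - n)"
  using assms mod_pos_pos_trivial[of "x + d - n" n] by auto

lemma reflect_mod:
  fixes x d n :: int
  assumes "0 \<le> x" "x < n" "0 \<le> d" "d < n"
  shows "(d - x) mod n = (if x \<le> d then d - x else d - x + n)"
  using assms mod_pos_pos_trivial[of "d - x + n" n] by auto

lemma rotation_reverses_an_edge:
  fixes G :: "nat \<Rightarrow> int"
  assumes E: "simple_graph n E" and "graph_connected n E"
    and G: "bij_betw G {1..n} {0..<int n}" and "0 < d" "d < int n"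
  obtains u v where "E u v" "G v < G u" "(G u + d) mod int n < (G v + d) mod int n"
proof -
  define A where "A = {v \<in> {1..n}. int n - d \<le> G v}"
  have range: "G ` {1..n} = {0..<int n}" using G by (simp add: bij_betw_def)
  have "int n - 1 \<in> G ` {1..n}" "0 \<in> G ` {1..n}"
    using range \<open>0 < d\<close> \<open>d < int n\<close> by auto
  then obtain u0 w0 where "u0 \<in> {1..n}" "G u0 = int n - 1" "w0 \<in> {1..n}" "G w0 = 0"
    by (metis imageE)
  moreover have "A \<subseteq> {1..n}" unfolding A_def by blast
  ultimately have "u0 \<in> A" "w0 \<in> {1..n}" "w0 \<notin> A" "A \<subseteq> {1..n}"
    using \<open>0 < d\<close> \<open>d < int n\<close> unfolding A_def by auto
  then obtain x y where xy: "E x y" "x \<in> A" "y \<notin> A"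
    using connected_edge_leaving[OF \<open>graph_connected n E\<close>] by metis
  have "y \<in> {1..n}" using xy(1) E unfolding simple_graph_def by blast
  then have "G y \<in> {0..<int n}" "G y < int n - d" using xy(3) range unfolding A_def by auto
  moreover have "G x \<in> {0..<int n}" "int n - d \<le> G x" using xy(2) range unfolding A_def by auto
  ultimately show thesis
    using that[OF xy(1)] shift_mod[of "G x" "int n" d] shift_mod[of "G y" "int n" d]
      \<open>0 < d\<close> \<open>d < int n\<close> by auto
qed

lemma reflection_yields_bipartition:
  fixes G :: "nat \<Rightarrow> int"
  assumes E: "simple_graph n E" and G: "inj_on G {1..n}" "G ` {1..n} \<subseteq> {0..<int n}"
    and "0 \<le> d" "d < int n"
    and order: "\<And>u v. E u v \<Longrightarrow> G u < G v \<longleftrightarrow> (d - G u) mod int n < (d - G v) mod int n"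
  shows "bipartite n E"
  unfolding bipartite_def
proof (intro exI conjI allI impI)
  show "{v \<in> {1..n}. G v \<le> d} \<subseteq> {1..n}" by blast
  fix u v assume "E u v"
  then have uv: "u \<in> {1..n}" "v \<in> {1..n}" "u \<noteq> v" using E unfolding simple_graph_def by auto
  then have "G u \<noteq> G v" using inj_onD[OF G(1)] by blast
  moreover have "G u \<in> {0..<int n}" "G v \<in> {0..<int n}" using uv(1,2) G(2) by blast+
  ultimately show "u \<in> {v \<in> {1..n}. G v \<le> d} \<longleftrightarrow> v \<notin> {v \<in> {1..n}. G v \<le> d}"
    using order[OF \<open>E u v\<close>] uv reflect_mod[of "G u" "int n" d] reflect_mod[of "G v" "int n" d]
      \<open>0 \<le> d\<close> \<open>d < int n\<close> by (auto split: if_splits)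
qed

theorem proposition2:
  fixes n :: nat and E :: "nat \<Rightarrow> nat \<Rightarrow> bool" and \<pi> :: "nat list"
    and g g' :: "nat \<Rightarrow> nat"
  assumes "simple_graph n E"
    and "graph_connected n E"
    and "\<pi> \<in> perms_Y n"
    and "g \<in> dihedral n" and "g' \<in> dihedral n" and "g \<noteq> g'"
    and "upd_class n E (act n g \<pi>) = upd_class n E (act n g' \<pi>)"
  shows "bipartite n E"
proof -
  obtain s d where s: "s = 1 \<or> s = -1" and d: "0 \<le> d" "d < int n"
    and rotation: "s = 1 \<Longrightarrow> d \<noteq> 0"
    and rel: "\<And>i. i < n \<Longrightarrow> int (g' (Suc i)) - 1 = (s * (int (g (Suc i)) - 1) + d) mod int n"
    using dihedral_relative_affine[OF assms(4-6)] by blast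
  obtain p where p: "bij_betw p {1..n} {..<n}"
    and edge_order: "\<And>u v. E u v \<Longrightarrow>
      g (Suc (p u)) < g (Suc (p v)) \<longleftrightarrow> g' (Suc (p u)) < g' (Suc (p v))"
    using upd_class_eq_vertex_order[OF assms(1,3) dihedral_bij[OF assms(4)] dihedral_bij[OF assms(5)]
        assms(7)] by blast
  define G where "G v = int (g (Suc (p v))) - 1" for v
  have G: "bij_betw G {1..n} {0..<int n}"
    using bij_betw_trans[OF p bij_betw_positions[OF dihedral_bij[OF assms(4)]]]
    unfolding G_def comp_def .
  have order: "G u < G v \<longleftrightarrow> (s * G u + d) mod int n < (s * G v + d) mod int n" if "E u v" for u v
  proof -
    have "p u < n" "p v < n" using that assms(1) bij_betwE[OF p] unfolding simple_graph_def by auto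
    then show ?thesis using edge_order[OF that] by (simp add: G_def flip: rel)
  qed
  show ?thesis
  proof (cases "s = 1")
    case True
    with d rotation have "0 < d" by auto
    then obtain u v where "E u v" "G v < G u" "(G u + d) mod int n < (G v + d) mod int n"
      using rotation_reverses_an_edge[OF assms(1,2) G _ d(2)] by blast
    then show ?thesis using order[of u v] True by (simp add: not_less_iff_gr_or_eq)
  next
    case False
    then show ?thesis
      using reflection_yields_bipartition[OF assms(1) bij_betw_imp_inj_on[OF G] _ d] G order s
      by (simp add: bij_betw_def)
  qed
qed

end
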